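(* Let $X$ and $Y$ be metric spaces, and assume that $Y$ is metrically convex and unbounded. Let $K\ge0$ and let $f:X\to Y$ be a coarse quotient map with constant $K$ that is coarse Lipschitz. Then $${\rm Lip}_\infty(f)\,c_\infty(f)\ge 1.$$
   Context: For a metric space $Z$, $B_Z(z,r)$ is the closed ball of radius $r$ about $z$; for $A\subseteq Y$, $A^K:=\{y\in Y: d_Y(y,a)\le K\text{ for some }a\in A\}$. $Y$ is metrically convex if for all $y_0,y_1\in Y$ and $0<\lambda<1$ there is $y_\lambda$ with $d(y_0,y_\lambda)=\lambda d(y_0,y_1)$ and $d(y_1,y_\lambda)=(1-\lambda)d(y_0,y_1)$. The modulus of continuity of $f$ is $\omega_f(t):=\sup\{d_Y(f(x),f(y)): d_X(x,y)\le t\}$; $f$ is coarsely continuous if $\omega_f(t)<\infty$ for all $t>0$. $f$ is co-coarsely continuous with constant $K$ if for every $d>K$ there is $\delta(d)>0$ with $f(B_X(x,\delta))^K\supseteq B_Y(f(x),d)$ for all $x\in X$. $f$ is a coarse quotient map with constant $K$ if it is coarsely continuous and co-coarsely continuous with constant $K$. For $s>0$, ${\rm Lip}_s(f):=\sup\{d_Y(f(x),f(y))/d_X(x,y): d_X(x,y)\ge s\}$, ${\rm Lip}_\infty(f):=\inf_{s>0}{\rm Lip}_s(f)$, and $f$ is coarse Lipschitz if ${\rm Lip}_s(f)<\infty$ for some $s>0$. For $d>K$, let $c_d$ be the infimum of all $c>0$ such that $f(B_X(x,cr))^K\supseteq B_Y(f(x),r)$ for all $x\in X$ and all $r\ge d$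 (such $c$ exist since $Y$ is metrically convex); $(c_d)_{d>K}$ is non-increasing, and $c_\infty(f):=\inf_{d>K}c_d=\lim_{d\to\infty}c_d$. *)

theory Defs
  imports "HOL-Analysis.Analysis"
begin

definition nbhd :: "real \<Rightarrow> 'b::metric_space set \<Rightarrow> 'b set" where
  "nbhd K A = {y. \<exists>a\<in>A. dist y a \<le> K}"

definition metrically_convex :: "'b::metric_space itself \<Rightarrow> bool" where
  "metrically_convex (_ :: 'b itself) \<longleftrightarrow>
     (\<forall>(y0::'b) y1 (l::real). 0 < l \<and> l < 1 \<longrightarrow>
        (\<exists>yl. dist y0 yl = l * dist y0 y1 \<and> dist y1 yl = (1 - l) * dist y0 y1))"

definition modulus :: "('a::metric_space \<Rightarrow> 'b::metric_space) \<Rightarrow> real \<Rightarrow> ereal" where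
  "modulus f t = (SUP p \<in> {(x, y). dist x y \<le> t}. ereal (dist (f (fst p)) (f (snd p))))"

definition coarsely_continuous :: "('a::metric_space \<Rightarrow> 'b::metric_space) \<Rightarrow> bool" where
  "coarsely_continuous f \<longleftrightarrow> (\<forall>t>0. modulus f t < \<infinity>)"

definition co_coarsely_continuous :: "('a::metric_space \<Rightarrow> 'b::metric_space) \<Rightarrow> real \<Rightarrow> bool" where
  "co_coarsely_continuous f K \<longleftrightarrow>
     (\<forall>d>K. \<exists>\<delta>>0. \<forall>x. cball (f x) d \<subseteq> nbhd K (f ` cball x \<delta>))"

definition coarse_quotient_map :: "('a::metric_space \<Rightarrow> 'b::metric_space) \<Rightarrow> real \<Rightarrow> bool" where
  "coarse_quotient_map f K \<longleftrightarrow> coarsely_continuous f \<and> co_coarsely_continuous f K"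

text \<open>Lip_s(f); the supremum of the empty set is taken to be 0 (all quotients are \<ge> 0).\<close>
definition Lip_s :: "real \<Rightarrow> ('a::metric_space \<Rightarrow> 'b::metric_space) \<Rightarrow> ereal" where
  "Lip_s s f = Sup (insert 0 {ereal (dist (f x) (f y) / dist x y) | x y. dist x y \<ge> s})"

definition Lip_inf :: "('a::metric_space \<Rightarrow> 'b::metric_space) \<Rightarrow> ereal" where
  "Lip_inf f = (INF s \<in> {s. s > 0}. Lip_s s f)"

definition coarse_Lipschitz :: "('a::metric_space \<Rightarrow> 'b::metric_space) \<Rightarrow> bool" where
  "coarse_Lipschitz f \<longleftrightarrow> (\<exists>s>0. Lip_s s f < \<infinity>)"

definition c_d :: "('a::metric_space \<Rightarrow> 'b::metric_space) \<Rightarrow> real \<Rightarrow> real \<Rightarrow> ereal" where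
  "c_d f K d = Inf (ereal ` {c. c > 0 \<and>
       (\<forall>x r. r \<ge> d \<longrightarrow> cball (f x) r \<subseteq> nbhd K (f ` cball x (c * r)))})"

definition c_inf :: "('a::metric_space \<Rightarrow> 'b::metric_space) \<Rightarrow> real \<Rightarrow> ereal" where
  "c_inf f K = (INF d \<in> {d. d > K}. c_d f K d)"

end

theory Submission
  imports Defs
begin

text \<open>Fix x and a scale c for which the K-neighbourhood of f(B(x, c r)) covers B(f x, r)
  for all large r. Unboundedness and metric convexity give a point z at distance exactly r
  from f x, so some y with d(x, y) \<le> c r has d(f x, f y) \<ge> r - K; for large r this forces
  d(x, y) to be large and Lip_s(f) \<ge> (r - K) / (c r), which tends to 1/c. Taking infima
  over the admissible c gives c_inf(f) \<ge> 1 / Lip_inf(f). Co-coarse continuity, chained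
  along geodesic-like steps, guarantees that some admissible c exists, so Lip_inf(f) > 0.\<close>

definition linearly_co_coarse ::
    "('a::metric_space \<Rightarrow> 'b::metric_space) \<Rightarrow> real \<Rightarrow> real \<Rightarrow> real \<Rightarrow> bool" where
  "linearly_co_coarse f K c d \<longleftrightarrow>
     (\<forall>x r. r \<ge> d \<longrightarrow> cball (f x) r \<subseteq> nbhd K (f ` cball x (c * r)))"

lemma c_d_eq: "c_d f K d = Inf (ereal ` {c. c > 0 \<and> linearly_co_coarse f K c d})"
  unfolding c_d_def linearly_co_coarse_def ..

lemma metrically_convex_intermediate_point:
  fixes a b :: "'b::metric_space"
  assumes "metrically_convex TYPE('b)" and "0 \<le> r" and "r \<le> dist a b"
  shows "\<exists>z. dist a z = r \<and> dist z b = dist a b - r"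
proof (cases "r = 0 \<or> r = dist a b")
  case True
  then show ?thesis
    by (metis diff_self diff_zero dist_self)
next
  case False
  define l where "l = r / dist a b"
  have "0 < r" "r < dist a b" "0 < dist a b"
    using False assms(2,3) by auto
  then have "0 < l" "l < 1"
    by (simp_all add: l_def divide_less_eq)
  then obtain z where "dist a z = l * dist a b" "dist b z = (1 - l) * dist a b"
    using assms(1) unfolding metrically_convex_def by blast
  moreover have "l * dist a b = r"
    using False assms(2,3) by (auto simp: l_def)
  ultimately show ?thesis
    by (metis add_diff_cancel_left' dist_commute left_diff_distrib' mult_1)
qed

text \<open>Each unit step in Y is lifted by one application of co-coarse continuity at scale
  K + 1; metric convexity cuts a long segment into unit steps.\<close>
lemma co_coarse_chain:
  fixes f :: "'a::metric_space \<Rightarrow> 'b::metric_space"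
  assumes mc: "metrically_convex TYPE('b)" and "K \<ge> 0"
    and cc: "\<And>x. cball (f x) (K + 1) \<subseteq> nbhd K (f ` cball x \<delta>)"
    and "dist (f x) y \<le> real n"
  shows "\<exists>x'. dist x x' \<le> real n * \<delta> \<and> dist y (f x') \<le> K"
  using assms(4)
proof (induction n arbitrary: y)
  case 0
  then show ?case
    using \<open>K \<ge> 0\<close> by (intro exI[of _ x]) auto
next
  case (Suc n)
  obtain z where z_near: "dist (f x) z \<le> real n" and z_step: "dist z y \<le> 1"
  proof (cases "dist (f x) y \<le> 1")
    case True
    then show ?thesis
      using that[of "f x"] by simp
  next
    case False
    then obtain z where "dist (f x) z = dist (f x) y - 1" "dist z y = 1"
      using metrically_convex_intermediate_point[OF mc, of "dist (f x) y - 1" "f x" y] by auto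
    then show ?thesis
      using that[of z] Suc.prems by simp
  qed
  obtain x' where x': "dist x x' \<le> real n * \<delta>" "dist z (f x') \<le> K"
    using Suc.IH[OF z_near] by blast
  have "dist (f x') y \<le> K + 1"
    using dist_triangle[of "f x'" y z] x' z_step by (simp add: dist_commute)
  then obtain x'' where x'': "dist x' x'' \<le> \<delta>" "dist y (f x'') \<le> K"
    using cc[of x'] unfolding nbhd_def by auto
  have "dist x x'' \<le> real (Suc n) * \<delta>"
    using dist_triangle[of x x'' x'] x' x'' by (simp add: algebra_simps)
  with x'' show ?case
    by blast
qed

lemma coarse_quotient_map_linearly_co_coarse:
  fixes f :: "'a::metric_space \<Rightarrow> 'b::metric_space"
  assumes mc: "metrically_convex TYPE('b)" and K: "K \<ge> 0" and "coarse_quotient_map f K"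
  obtains c where "c > 0" "linearly_co_coarse f K c (K + 1)"
proof -
  obtain \<delta> where "\<delta> > 0" and cc: "\<And>x. cball (f x) (K + 1) \<subseteq> nbhd K (f ` cball x \<delta>)"
    using assms(3) unfolding coarse_quotient_map_def co_coarsely_continuous_def
    by (meson less_add_one)
  have "cball (f x) r \<subseteq> nbhd K (f ` cball x ((2 * \<delta>) * r))" if r: "r \<ge> K + 1" for x r
  proof
    fix y assume "y \<in> cball (f x) r"
    moreover define n where "n = nat \<lceil>r\<rceil>"
    ultimately have "dist (f x) y \<le> real n"
      by (simp add: n_def) linarith
    then obtain x' where x': "dist x x' \<le> real n * \<delta>" "dist y (f x') \<le> K"
      using co_coarse_chain[OF mc K cc] by blast
    have "real n \<le> 2 * r"
      using r K by (simp add: n_def) linarith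
    then have "real n * \<delta> \<le> (2 * \<delta>) * r"
      using \<open>\<delta> > 0\<close> by (simp add: algebra_simps)
    with x' show "y \<in> nbhd K (f ` cball x ((2 * \<delta>) * r))"
      unfolding nbhd_def by force
  qed
  then show thesis
    using that[of "2 * \<delta>"] \<open>\<delta> > 0\<close> unfolding linearly_co_coarse_def by auto
qed

lemma coarsely_continuous_bounded_increment:
  assumes "coarsely_continuous f" and "s > 0"
  obtains M where "\<And>x y. dist x y \<le> s \<Longrightarrow> dist (f x) (f y) \<le> M"
proof -
  have upper: "ereal (dist (f x) (f y)) \<le> modulus f s" if "dist x y \<le> s" for x y
    unfolding modulus_def
    using SUP_upper[of "(x, y)" "{(x, y). dist x y \<le> s}" "\<lambda>p. ereal (dist (f (fst p)) (f (snd p)))"]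
      that by auto
  have "modulus f s \<noteq> \<infinity>"
    using assms unfolding coarsely_continuous_def by auto
  moreover have "modulus f s \<noteq> -\<infinity>"
    using upper[of undefined undefined] \<open>s > 0\<close> by auto
  ultimately obtain M where "modulus f s = ereal M"
    by (cases "modulus f s") auto
  then show thesis
    using that[of M] upper by simp
qed

lemma Lip_s_nonneg: "0 \<le> Lip_s s f"
  unfolding Lip_s_def by (rule Sup_upper) simp

lemma dist_le_Lip_s:
  assumes "Lip_s s f = ereal L" and "dist x y \<ge> s" and "dist x y > 0"
  shows "dist (f x) (f y) \<le> L * dist x y"
proof -
  have "ereal (dist (f x) (f y) / dist x y) \<le> Lip_s s f"
    unfolding Lip_s_def using assms(2) by (intro Sup_upper) blast
  then show ?thesis
    using assms(1,3) by (simp add: divide_le_eq)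
qed

lemma inverse_scale_le_Lip_s:
  fixes f :: "'a::metric_space \<Rightarrow> 'b::metric_space"
  assumes mc: "metrically_convex TYPE('b)" and unbounded: "\<not> bounded (UNIV :: 'b set)"
    and "K \<ge> 0" and "coarsely_continuous f" and "s > 0"
    and "c > 0" and lin: "linearly_co_coarse f K c d"
  shows "ereal (1 / c) \<le> Lip_s s f"
proof (rule ccontr)
  assume "\<not> ereal (1 / c) \<le> Lip_s s f"
  then obtain L where L: "Lip_s s f = ereal L" "L < 1 / c"
    using Lip_s_nonneg[of s f] by (cases "Lip_s s f") auto
  then have "0 \<le> L"
    using Lip_s_nonneg[of s f] by simp
  have cL: "c * L < 1"
    using L \<open>c > 0\<close> by (simp add: field_simps)
  obtain M where M: "\<And>x y. dist x y \<le> s \<Longrightarrow> dist (f x) (f y) \<le> M"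
    using coarsely_continuous_bounded_increment[OF assms(4,5)] by blast
  define r where "r = max d (max (M + K + 1) (K / (1 - c * L) + 1))"
  have r: "r \<ge> d" "r \<ge> M + K + 1" "r > K / (1 - c * L)"
    unfolding r_def by auto
  have "0 \<le> M"
    using M[of undefined undefined] \<open>s > 0\<close> by simp
  then have "r \<ge> 0"
    using r \<open>K \<ge> 0\<close> by linarith
  fix x :: 'a
  obtain w where "dist (f x) w > r"
    using unbounded unfolding bounded_any_center[of _ "f x"] by (meson not_le)
  then obtain z where z: "dist (f x) z = r"
    using metrically_convex_intermediate_point[OF mc \<open>r \<ge> 0\<close>, of "f x" w] by fastforce
  then obtain y where y: "dist x y \<le> c * r" "dist z (f y) \<le> K"
    using lin r(1) unfolding linearly_co_coarse_def nbhd_def by fastforce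
  have far: "dist (f x) (f y) \<ge> r - K"
    using dist_triangle[of "f x" z "f y"] z y(2) by (simp add: dist_commute)
  then have "dist x y > s"
    using M[of x y] r(2) by fastforce
  then have "dist (f x) (f y) \<le> L * dist x y"
    using \<open>s > 0\<close> by (intro dist_le_Lip_s[OF L(1)]) auto
  also have "\<dots> \<le> L * (c * r)"
    using y(1) \<open>0 \<le> L\<close> by (simp add: mult_left_mono)
  finally have "r * (1 - c * L) \<le> K"
    using far by (simp add: algebra_simps)
  then have "r \<le> K / (1 - c * L)"
    using cL by (simp add: field_simps)
  then show False
    using r(3) by linarith
qed

lemma inverse_scale_le_Lip_inf:
  fixes f :: "'a::metric_space \<Rightarrow> 'b::metric_space"
  assumes "metrically_convex TYPE('b)" and "\<not> bounded (UNIV :: 'b set)"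
    and "K \<ge> 0" and "coarsely_continuous f"
    and "c > 0" and "linearly_co_coarse f K c d"
  shows "ereal (1 / c) \<le> Lip_inf f"
  unfolding Lip_inf_def
  using inverse_scale_le_Lip_s[OF assms(1-4) _ assms(5,6)] by (auto intro: INF_greatest)

lemma coarse_Lipschitz_Lip_inf_finite: "coarse_Lipschitz f \<Longrightarrow> Lip_inf f < \<infinity>"
  unfolding coarse_Lipschitz_def Lip_inf_def
  by (meson INF_lower le_less_trans mem_Collect_eq)

lemma inverse_le_c_inf:
  assumes "l > 0" and "\<And>c d. c > 0 \<Longrightarrow> d > K \<Longrightarrow> linearly_co_coarse f K c d \<Longrightarrow> 1 / c \<le> l"
  shows "ereal (1 / l) \<le> c_inf f K"
  unfolding c_inf_def c_d_eq
proof (rule INF_greatest, rule Inf_greatest)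
  fix d y assume "d \<in> {d. d > K}" and "y \<in> ereal ` {c. c > 0 \<and> linearly_co_coarse f K c d}"
  then obtain c where "y = ereal c" "c > 0" "1 / c \<le> l"
    using assms(2) by blast
  then show "ereal (1 / l) \<le> y"
    using assms(1) by (simp add: field_simps)
qed

theorem lemma2p4:
  fixes f :: "'a::metric_space \<Rightarrow> 'b::metric_space" and K :: real
  assumes "metrically_convex TYPE('b)"
    and "\<not> bounded (UNIV :: 'b set)"
    and "K \<ge> 0"
    and "coarse_quotient_map f K"
    and "coarse_Lipschitz f"
  shows "Lip_inf f * c_inf f K \<ge> 1"
proof -
  have cont: "coarsely_continuous f"
    using assms(4) unfolding coarse_quotient_map_def by simp
  note Lip_inf_lower = inverse_scale_le_Lip_inf[OF assms(1-3) cont]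
  obtain c0 where "c0 > 0" "linearly_co_coarse f K c0 (K + 1)"
    using coarse_quotient_map_linearly_co_coarse[OF assms(1,3,4)] .
  then have "0 < Lip_inf f"
    using Lip_inf_lower[of c0] by (meson ereal_less(2) less_le_trans zero_less_divide_1_iff)
  then obtain l where l: "Lip_inf f = ereal l" "l > 0"
    using coarse_Lipschitz_Lip_inf_finite[OF assms(5)]
    by (cases "Lip_inf f") auto
  have "ereal (1 / l) \<le> c_inf f K"
    using inverse_le_c_inf[of l] Lip_inf_lower l by force
  then have "ereal l * ereal (1 / l) \<le> Lip_inf f * c_inf f K"
    unfolding l(1) by (rule ereal_mult_left_mono) (use l in simp)
  then show ?thesis
    using l by (simp add: one_ereal_def)
qed

end
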